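(* Let $n$ be a fixed positive integer and, for $k\ge0$, let \[ C_k=\sum_{j=0}^{n-1}\frac{n^j}{j!}+\frac{n^{n-1}}{(n-1)!}\left(1+n+\cfrac{a_1}{b_1+\cfrac{a_2}{\ddots+\cfrac{a_k}{b_k}}}\right),\qquad a_m=-n(m+n-1),\ b_m=m+2n+1, \] (with the continued fraction term equal to $0$ when $k=0$). Then, as $k\to\infty$, \[ \left|e^n-C_k\right|=O\left(\frac{n^{k+1}}{(k+1)(k+2)\,(n)_{k+2}}\right). \]
   Context: $(a)_0=1$ and $(a)_m=a(a+1)\cdots(a+m-1)$ denotes the Pochhammer symbol. *)

theory Defs
  imports "HOL-Analysis.Analysis" "HOL-Library.Landau_Symbols"
begin

primrec contfrac :: "(nat \<Rightarrow> real) \<Rightarrow> (nat \<Rightarrow> real) \<Rightarrow> nat \<Rightarrow> nat \<Rightarrow> real" where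
  "contfrac a b m 0 = 0"
| "contfrac a b m (Suc j) = a m / (b m + contfrac a b (Suc m) j)"

definition cf_a :: "nat \<Rightarrow> nat \<Rightarrow> real" where
  "cf_a n m = - real n * (real m + real n - 1)"

definition cf_b :: "nat \<Rightarrow> nat \<Rightarrow> real" where
  "cf_b n m = real m + 2 * real n + 1"

definition C_approx :: "nat \<Rightarrow> nat \<Rightarrow> real" where
  "C_approx n k = (\<Sum>j<n. real n ^ j / fact j)
     + real n ^ (n - 1) / fact (n - 1) * (1 + real n + contfrac (cf_a n) (cf_b n) 1 k)"

end

theory Submission
  imports Defs
begin

text \<open>
  The Wallis denominators of the continued fraction are \<open>Q k = k (n)_k / n\<close>, so the
  determinant formula \<open>P (k+1) Q k - P k Q (k+1) = - (\<Prod>i=1..k. - a i)\<close> turns its value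
  into the partial sum \<open>- n^2 \<Sum>j<k. g j\<close> of the series with
  \<open>g j = n^(j+1) / ((j+1) (j+2) (n)_(j+2))\<close>. Splitting the exponential series at \<open>n\<close>
  gives \<open>e^n = \<Sum>j<n. n^j/j! + n^(n-1)/(n-1)! \<Sum>i\<ge>1. n^i/(n)_i\<close>, and a telescoping
  identity shows \<open>\<Sum>i\<ge>2. n^i/(n)_i + n^2 \<Sum>j. g j = n\<close>. Hence \<open>C_k - e^n\<close> is
  \<open>n^(n+1)/(n-1)!\<close> times the tail \<open>\<Sum>j\<ge>k. g j\<close>, whose terms at least halve from one
  to the next once \<open>j \<ge> n\<close>; so the error is at most twice the first term \<open>g k\<close>.
\<close>

fun wallis :: "(nat \<Rightarrow> 'a::comm_ring_1) \<Rightarrow> (nat \<Rightarrow> 'a) \<Rightarrow> 'a \<Rightarrow> 'a \<Rightarrow> nat \<Rightarrow> 'a" where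
  "wallis a b x0 x1 0 = x0"
| "wallis a b x0 x1 (Suc 0) = x1"
| "wallis a b x0 x1 (Suc (Suc k)) = b (Suc k) * wallis a b x0 x1 (Suc k) + a (Suc k) * wallis a b x0 x1 k"

text \<open>\<open>cf_numer a b (Suc k) / cf_denom a b (Suc k)\<close> is the \<open>k\<close>-th convergent of
  \<open>a 1 / (b 1 + a 2 / (b 2 + \<dots>))\<close>; index \<open>0\<close> holds the conventional values
  \<open>P (-1) = 1\<close>, \<open>Q (-1) = 0\<close>.\<close>

abbreviation cf_numer :: "(nat \<Rightarrow> 'a::comm_ring_1) \<Rightarrow> (nat \<Rightarrow> 'a) \<Rightarrow> nat \<Rightarrow> 'a" where
  "cf_numer a b \<equiv> wallis a b 1 0"

abbreviation cf_denom :: "(nat \<Rightarrow> 'a::comm_ring_1) \<Rightarrow> (nat \<Rightarrow> 'a) \<Rightarrow> nat \<Rightarrow> 'a" where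
  "cf_denom a b \<equiv> wallis a b 0 1"

fun contfrac_tail :: "(nat \<Rightarrow> real) \<Rightarrow> (nat \<Rightarrow> real) \<Rightarrow> nat \<Rightarrow> nat \<Rightarrow> real \<Rightarrow> real" where
  "contfrac_tail a b m 0 t = t"
| "contfrac_tail a b m (Suc j) t = a m / (b m + contfrac_tail a b (Suc m) j t)"

lemma contfrac_eq_contfrac_tail: "contfrac a b m j = contfrac_tail a b m j 0"
  by (induction j arbitrary: m) auto

lemma contfrac_tail_Suc_last:
  "contfrac_tail a b m (Suc j) t = contfrac_tail a b m j (a (m + j) / (b (m + j) + t))"
  by (induction j arbitrary: m) auto

text \<open>The hypothesis says that \<open>[L, \<infinity>)\<close> avoids the poles of the maps
  \<open>t \<mapsto> a m / (b m + t)\<close> and is mapped into itself by them, so no denominator vanishes.\<close>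
lemma contfrac_tail_eq_wallis:
  fixes L t :: real
  assumes stable: "\<And>m s. s \<ge> L \<Longrightarrow> b m + s \<noteq> 0 \<and> a m / (b m + s) \<ge> L"
    and "t \<ge> L"
  shows "contfrac_tail a b 1 k t =
    (cf_numer a b (Suc k) + t * cf_numer a b k) / (cf_denom a b (Suc k) + t * cf_denom a b k)"
  using \<open>t \<ge> L\<close>
proof (induction k arbitrary: t)
  case 0
  then show ?case by simp
next
  case (Suc k)
  define d where "d = b (Suc k) + t"
  have "d \<noteq> 0" and "a (Suc k) / d \<ge> L"
    using stable[OF Suc.prems] by (simp_all add: d_def)
  have "contfrac_tail a b 1 (Suc k) t = contfrac_tail a b 1 k (a (Suc k) / d)"
    unfolding contfrac_tail_Suc_last d_def by simp
  also have "\<dots> = (d * cf_numer a b (Suc k) + a (Suc k) * cf_numer a b k)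
      / (d * cf_denom a b (Suc k) + a (Suc k) * cf_denom a b k)"
    using Suc.IH[OF \<open>a (Suc k) / d \<ge> L\<close>] \<open>d \<noteq> 0\<close>
    by (simp add: add_divide_eq_iff divide_divide_eq_left' mult.commute)
  also have "\<dots> = (cf_numer a b (Suc (Suc k)) + t * cf_numer a b (Suc k))
      / (cf_denom a b (Suc (Suc k)) + t * cf_denom a b (Suc k))"
    by (simp add: d_def algebra_simps)
  finally show ?case .
qed

lemma wallis_det:
  "cf_numer a b (Suc k) * cf_denom a b k - cf_numer a b k * cf_denom a b (Suc k)
     = - (\<Prod>i<k. - a (Suc i))"
proof (induction k)
  case 0
  then show ?case by simp
next
  case (Suc k)
  let ?P = "cf_numer a b" and ?Q = "cf_denom a b"
  have "?P (Suc (Suc k)) * ?Q (Suc k) - ?P (Suc k) * ?Q (Suc (Suc k))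
      = - a (Suc k) * (?P (Suc k) * ?Q k - ?P k * ?Q (Suc k))"
    by (simp add: algebra_simps)
  also have "\<dots> = - (\<Prod>i<Suc k. - a (Suc i))"
    using Suc.IH by simp
  finally show ?case .
qed

lemma wallis_convergent_eq_sum:
  fixes a b :: "nat \<Rightarrow> 'a::field"
  assumes "\<And>j. j \<le> k \<Longrightarrow> cf_denom a b (Suc j) \<noteq> 0"
  shows "cf_numer a b (Suc k) / cf_denom a b (Suc k)
    = - (\<Sum>j<k. (\<Prod>i<Suc j. - a (Suc i)) / (cf_denom a b (Suc j) * cf_denom a b (Suc (Suc j))))"
  using assms
proof (induction k)
  case 0
  then show ?case by simp
next
  case (Suc k)
  let ?P = "cf_numer a b" and ?Q = "cf_denom a b"
  have "?Q (Suc k) \<noteq> 0" "?Q (Suc (Suc k)) \<noteq> 0"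
    using Suc.prems[of k] Suc.prems[of "Suc k"] by (simp_all del: wallis.simps)
  then have "?P (Suc (Suc k)) / ?Q (Suc (Suc k)) - ?P (Suc k) / ?Q (Suc k)
      = - (\<Prod>i<Suc k. - a (Suc i)) / (?Q (Suc k) * ?Q (Suc (Suc k)))"
    using wallis_det[of a b "Suc k"] by (simp add: field_simps)
  then show ?case
    using Suc by (simp add: algebra_simps)
qed

lemma cf_interval_stable:
  assumes "t \<ge> - real n"
  shows "cf_b n m + t \<noteq> 0 \<and> cf_a n m / (cf_b n m + t) \<ge> - real n"
proof
  have d: "cf_b n m + t \<ge> real m + real n + 1"
    using assms by (simp add: cf_b_def)
  then show "cf_b n m + t \<noteq> 0" by linarith
  have "real n * (real m + real n - 1) \<le> real n * (cf_b n m + t)"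
    using d by (intro mult_left_mono) auto
  with d show "cf_a n m / (cf_b n m + t) \<ge> - real n"
    by (simp add: cf_a_def field_simps)
qed

lemma cf_denom_eq_pochhammer:
  assumes "n > 0"
  shows "cf_denom (cf_a n) (cf_b n) k = real k * pochhammer (real n) k / real n"
proof (induction k rule: induct_nat_012)
  case (ge2 k)
  have "cf_denom (cf_a n) (cf_b n) (Suc (Suc k))
      = cf_b n (Suc k) * (real (Suc k) * pochhammer (real n) (Suc k) / real n)
        + cf_a n (Suc k) * (real k * pochhammer (real n) k / real n)"
    using ge2 by simp
  also have "\<dots> = real (Suc (Suc k)) * pochhammer (real n) (Suc (Suc k)) / real n"
    using assms by (simp add: pochhammer_Suc cf_a_def cf_b_def field_simps)
  finally show ?case .
qed (use assms in simp_all)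

lemma prod_minus_cf_a: "(\<Prod>i<m. - cf_a n (Suc i)) = real n ^ m * pochhammer (real n) m"
  by (induction m) (simp_all add: cf_a_def pochhammer_Suc algebra_simps)

definition cf_term :: "real \<Rightarrow> nat \<Rightarrow> real" where
  "cf_term x k = x ^ (k + 1) / (real (k + 1) * real (k + 2) * pochhammer x (k + 2))"

lemma contfrac_cf_eq_sum:
  assumes "n > 0"
  shows "contfrac (cf_a n) (cf_b n) 1 k = - (real n ^ 2 * (\<Sum>j<k. cf_term (real n) j))"
proof -
  let ?Q = "cf_denom (cf_a n) (cf_b n)"
  have Q_pos: "?Q (Suc j) > 0" for j
    using assms by (simp add: cf_denom_eq_pochhammer pochhammer_pos)
  have "contfrac (cf_a n) (cf_b n) 1 k = cf_numer (cf_a n) (cf_b n) (Suc k) / ?Q (Suc k)"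
    using contfrac_tail_eq_wallis[where L = "- real n" and t = 0, OF cf_interval_stable]
    by (simp add: contfrac_eq_contfrac_tail)
  also have "\<dots> = - (\<Sum>j<k. (\<Prod>i<Suc j. - cf_a n (Suc i)) / (?Q (Suc j) * ?Q (Suc (Suc j))))"
    by (intro wallis_convergent_eq_sum Q_pos[THEN dual_order.strict_implies_not_eq])
  also have "(\<lambda>j. (\<Prod>i<Suc j. - cf_a n (Suc i)) / (?Q (Suc j) * ?Q (Suc (Suc j))))
      = (\<lambda>j. real n ^ 2 * cf_term (real n) j)"
  proof
    fix j
    have "pochhammer (real n) (Suc j) > 0" "pochhammer (real n) (Suc (Suc j)) > 0"
      using assms by (simp_all add: pochhammer_pos)
    with assms show "(\<Prod>i<Suc j. - cf_a n (Suc i)) / (?Q (Suc j) * ?Q (Suc (Suc j)))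
        = real n ^ 2 * cf_term (real n) j"
      unfolding prod_minus_cf_a cf_denom_eq_pochhammer[OF assms] cf_term_def
      by (simp add: divide_simps power2_eq_square del: of_nat_Suc)
  qed
  finally show ?thesis by (simp add: sum_distrib_left)
qed

lemma cf_term_nonneg: "x > 0 \<Longrightarrow> cf_term x k \<ge> 0"
  by (simp add: cf_term_def pochhammer_nonneg)

lemma fact_add_eq_fact_mult_pochhammer:
  "(fact (m + i) :: 'a::{semiring_char_0,comm_semiring_1}) = fact m * pochhammer (of_nat (Suc m)) i"
  by (simp add: pochhammer_fact pochhammer_product')

lemma exp_eq_partial_sum_plus_pochhammer_series:
  fixes x :: real
  assumes "n > 0"
  shows "(\<lambda>i. x ^ (n - 1) / fact (n - 1) * (x ^ Suc i / pochhammer (real n) (Suc i)))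
    sums (exp x - (\<Sum>j<n. x ^ j / fact j))"
proof -
  obtain m where n: "n = Suc m" using assms by (cases n) auto
  have "(\<lambda>j. x ^ j / fact j) sums exp x"
    using exp_converges[of x] by (simp add: divide_inverse mult.commute)
  then have "(\<lambda>i. x ^ (i + n) / fact (i + n)) sums (exp x - (\<Sum>j<n. x ^ j / fact j))"
    using sums_iff_shift[of "\<lambda>j. x ^ j / fact j" n "exp x - (\<Sum>j<n. x ^ j / fact j)"] by simp
  moreover have "x ^ (i + n) / fact (i + n)
      = x ^ (n - 1) / fact (n - 1) * (x ^ Suc i / pochhammer (real n) (Suc i))" for i
  proof -
    have "fact (i + n) = (fact m :: real) * pochhammer (real n) (Suc i)"
      using fact_add_eq_fact_mult_pochhammer[of m "Suc i"] by (simp add: n add.commute)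
    then show ?thesis by (simp add: n power_add)
  qed
  ultimately show ?thesis by simp
qed

lemma power_le_pochhammer:
  fixes x :: "'a::linordered_semidom"
  assumes "x > 0"
  shows "x ^ j \<le> pochhammer x j"
proof (induction j)
  case (Suc j)
  have "x ^ j * x \<le> pochhammer x j * (x + of_nat j)"
    using Suc assms by (intro mult_mono) (auto simp: pochhammer_nonneg)
  then show ?case by (metis power_Suc2 pochhammer_Suc)
qed simp

text \<open>Each term is \<open>v j - v (j + 1)\<close> for \<open>v j = x^(j+2) / ((j+1) (x)_(j+1))\<close>, and \<open>v 0 = x\<close>.\<close>
lemma pochhammer_telescope:
  fixes x :: real
  assumes "x > 0"
  shows "(\<lambda>j. x ^ (j + 2) / pochhammer x (j + 2) + x ^ 2 * cf_term x j) sums x"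
proof -
  define v where "v j = x ^ (j + 2) / (real (j + 1) * pochhammer x (j + 1))" for j
  have "v \<longlonglongrightarrow> 0"
  proof (rule real_tendsto_sandwich[where f = "\<lambda>_. 0" and h = "\<lambda>j. x / real (Suc j)"])
    show "(\<lambda>j. x / real (Suc j)) \<longlonglongrightarrow> 0"
      using LIMSEQ_Suc[OF lim_const_over_n] .
    have "v j \<le> x / real (Suc j)" for j
    proof -
      have "x ^ (j + 1) / pochhammer x (j + 1) \<le> 1"
        using assms power_le_pochhammer[of x "j + 1"] by (simp add: pochhammer_pos)
      then have "x / real (Suc j) * (x ^ (j + 1) / pochhammer x (j + 1)) \<le> x / real (Suc j)"
        using assms by (intro mult_left_le) auto
      then show ?thesis by (simp add: v_def)
    qed
    then show "eventually (\<lambda>j. v j \<le> x / real (Suc j)) sequentially" by simp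
    show "eventually (\<lambda>j. 0 \<le> v j) sequentially"
      using assms by (simp add: v_def pochhammer_nonneg)
  qed auto
  then have "(\<lambda>j. v j - v (Suc j)) sums (v 0 - 0)"
    by (rule telescope_sums')
  moreover have "v j - v (Suc j) = x ^ (j + 2) / pochhammer x (j + 2) + x ^ 2 * cf_term x j" for j
  proof -
    have "pochhammer x (j + 1) > 0" "x + real j + 1 > 0" using assms by (simp_all add: pochhammer_pos)
    then show ?thesis
      unfolding v_def cf_term_def
      by (simp add: pochhammer_Suc divide_simps power2_eq_square) (simp add: algebra_simps)
  qed
  ultimately show ?thesis
    using assms by (simp add: v_def)
qed

lemma C_approx_minus_exp_sums:
  assumes n: "n > 0"
  defines "c \<equiv> real n ^ (n - 1) / fact (n - 1) * real n ^ 2"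
  shows "(\<lambda>i. c * cf_term (real n) (i + k)) sums (C_approx n k - exp (real n))"
proof -
  define x where "x = real n"
  define d where "d = x ^ (n - 1) / fact (n - 1)"
  define E where "E = exp x - (\<Sum>j<n. x ^ j / fact j)"
  have x: "x > 0" using n by (simp add: x_def)
  have "(\<lambda>i. d * (x ^ Suc i / pochhammer x (Suc i))) sums E"
    using exp_eq_partial_sum_plus_pochhammer_series[OF n] by (simp add: d_def E_def x_def)
  then have "(\<lambda>j. d * (x ^ (j + 2) / pochhammer x (j + 2))) sums (E - d)"
    using sums_Suc_iff[of "\<lambda>i. d * (x ^ Suc i / pochhammer x (Suc i))" "E - d"] x
    by (simp add: numeral_2_eq_2)
  moreover have "(\<lambda>j. d * (x ^ (j + 2) / pochhammer x (j + 2)) + d * x ^ 2 * cf_term x j) sums (d * x)"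
    using sums_mult[OF pochhammer_telescope[OF x], of d] by (simp add: algebra_simps)
  ultimately have "(\<lambda>j. d * x ^ 2 * cf_term x j) sums (d * x - (E - d))"
    using sums_diff by fastforce
  then have "(\<lambda>i. d * x ^ 2 * cf_term x (i + k)) sums
      (d * x - (E - d) - d * x ^ 2 * (\<Sum>j<k. cf_term x j))"
    by (subst sums_iff_shift) (simp add: sum_distrib_left)
  moreover have "C_approx n k - exp x = d * x - (E - d) - d * x ^ 2 * (\<Sum>j<k. cf_term x j)"
    unfolding C_approx_def contfrac_cf_eq_sum[OF n]
    by (simp add: d_def E_def x_def algebra_simps add_divide_distrib)
  ultimately show ?thesis
    by (simp add: c_def d_def x_def)
qed

lemma sums_le_geometric_ratio:
  fixes f :: "nat \<Rightarrow> real"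
  assumes "f sums s" "0 \<le> q" "q < 1" "\<And>j. f (Suc j) \<le> q * f j"
  shows "s \<le> f 0 / (1 - q)"
proof -
  have le: "f j \<le> f 0 * q ^ j" for j
  proof (induction j)
    case (Suc j)
    have "f (Suc j) \<le> q * (f 0 * q ^ j)"
      using assms(4)[of j] mult_left_mono[OF Suc assms(2)] by linarith
    then show ?case by (simp add: algebra_simps)
  qed simp
  have "(\<lambda>j. f 0 * q ^ j) sums (f 0 * (1 / (1 - q)))"
    using assms by (intro sums_mult geometric_sums) simp
  then show ?thesis
    using sums_le[OF le assms(1)] by simp
qed

lemma cf_term_Suc_le_half:
  assumes "x > 0" "x \<le> real j"
  shows "cf_term x (Suc j) \<le> cf_term x j / 2"
proof -
  have ratio: "cf_term x (Suc j) = cf_term x j * (x * (real j + 1) / ((real j + 3) * (x + real j + 2)))"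
    using assms pochhammer_pos[of x "j + 2"]
    unfolding cf_term_def by (simp add: pochhammer_Suc divide_simps) (simp add: algebra_simps)
  have "(2 * x) * (real j + 1) \<le> (x + real j + 2) * (real j + 3)"
    using assms by (intro mult_mono) auto
  moreover have "(real j + 3) * (x + real j + 2) > 0"
    using assms by simp
  ultimately have "x * (real j + 1) / ((real j + 3) * (x + real j + 2)) \<le> 1 / 2"
    by (simp add: pos_divide_le_eq algebra_simps)
  from mult_left_mono[OF this cf_term_nonneg[OF assms(1)]] show ?thesis
    unfolding ratio by simp
qed

lemma abs_exp_minus_C_approx_le:
  assumes "n > 0" "n \<le> k"
  defines "c \<equiv> real n ^ (n - 1) / fact (n - 1) * real n ^ 2"
  shows "\<bar>exp (real n) - C_approx n k\<bar> \<le> 2 * c * cf_term (real n) k"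
proof -
  have "c \<ge> 0" by (simp add: c_def)
  have sums: "(\<lambda>i. c * cf_term (real n) (i + k)) sums (C_approx n k - exp (real n))"
    using C_approx_minus_exp_sums[OF assms(1)] by (simp add: c_def)
  have "0 \<le> C_approx n k - exp (real n)"
    using sums_le[OF _ sums_zero sums] \<open>c \<ge> 0\<close> assms cf_term_nonneg by simp
  moreover have "c * cf_term (real n) (Suc i + k) \<le> 1 / 2 * (c * cf_term (real n) (i + k))" for i
  proof -
    have "cf_term (real n) (Suc (i + k)) \<le> cf_term (real n) (i + k) / 2"
      using assms by (intro cf_term_Suc_le_half) auto
    from mult_left_mono[OF this \<open>c \<ge> 0\<close>] show ?thesis by simp
  qed
  then have "C_approx n k - exp (real n) \<le> c * cf_term (real n) (0 + k) / (1 - 1 / 2)"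
    by (intro sums_le_geometric_ratio[OF sums]) simp_all
  ultimately show ?thesis by simp
qed

theorem corollary2p5:
  fixes n :: nat
  assumes "n > 0"
  shows "(\<lambda>k. \<bar>exp (real n) - C_approx n k\<bar>)
    \<in> O[sequentially](\<lambda>k. real n ^ (k + 1) /
          (real (k + 1) * real (k + 2) * pochhammer (real n) (k + 2)))"
proof (rule bigoI)
  show "eventually (\<lambda>k. norm \<bar>exp (real n) - C_approx n k\<bar>
      \<le> 2 * (real n ^ (n - 1) / fact (n - 1) * real n ^ 2)
        * norm (real n ^ (k + 1) / (real (k + 1) * real (k + 2) * pochhammer (real n) (k + 2))))
      sequentially"
    unfolding cf_term_def[symmetric] using eventually_ge_at_top[of n]
    by eventually_elim (use abs_exp_minus_C_approx_le[OF assms] assms cf_term_nonneg in simp)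
qed

end
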